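(* Let $N\ge2$, let $G$ be a connected undirected graph with $N$ vertices, and let $L$ be its Laplacian. For $0<\gamma\le\lambda_2(L)$ define \[ \Gamma_\infty(\gamma):=\sup_{t\ge0}\|e^{\gamma t}(e^{-Lt}-\mathbf{1}\bar{\mathbf{1}})\|_\infty. \] Then: (a) for all $0<\gamma\le\lambda_2(L)$, $2-\frac2N\le\Gamma_\infty(\gamma)\le N-1$; (b) if $G$ is a complete graph, then $\lambda_2(L)=N$ and $\Gamma_\infty(\gamma)=2-\frac2N$ for all $0<\gamma\le N$.
   Context: $\mathbf{1}=(1,\dots,1)^\top\in\mathbb{R}^N$, $\bar{\mathbf{1}}=\frac1N\mathbf{1}^\top$; $\|\cdot\|_\infty$ is the matrix norm induced by the maximum norm (maximum absolute row sum); $\lambda_2(L)$ is the second smallest eigenvalue of $L$. *)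

theory Defs
  imports "HOL-Analysis.Analysis" "HOL-Computational_Algebra.Polynomial"
begin

definition undirected_graph :: "('n \<Rightarrow> 'n \<Rightarrow> bool) \<Rightarrow> bool" where
  "undirected_graph E \<longleftrightarrow> (\<forall>i j. E i j \<longrightarrow> E j i) \<and> (\<forall>i. \<not> E i i)"

definition graph_connected :: "('n \<Rightarrow> 'n \<Rightarrow> bool) \<Rightarrow> bool" where
  "graph_connected E \<longleftrightarrow> (\<forall>i j. E\<^sup>*\<^sup>* i j)"

definition complete_graph :: "('n \<Rightarrow> 'n \<Rightarrow> bool) \<Rightarrow> bool" where
  "complete_graph E \<longleftrightarrow> (\<forall>i j. i \<noteq> j \<longrightarrow> E i j)"

definition laplacian :: "('n::finite \<Rightarrow> 'n \<Rightarrow> bool) \<Rightarrow> real^'n^'n" where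
  "laplacian E = (\<chi> i j. if i = j then real (card {k. E i k}) else if E i j then -1 else 0)"

fun mat_pow :: "real^'n::finite^'n \<Rightarrow> nat \<Rightarrow> real^'n^'n" where
  "mat_pow A 0 = mat 1"
| "mat_pow A (Suc k) = A ** mat_pow A k"

definition mat_exp :: "real^'n::finite^'n \<Rightarrow> real^'n^'n" where
  "mat_exp A = (\<Sum>k. (1 / fact k) *\<^sub>R mat_pow A k)"

(* the matrix 1 * (1/N) 1^T *)
definition avg_mat :: "real^'n::finite^'n" where
  "avg_mat = (\<chi> i j. 1 / real CARD('n))"

(* matrix norm induced by the maximum norm: maximum absolute row sum *)
definition inf_norm :: "real^'n::finite^'n \<Rightarrow> real" where
  "inf_norm A = Max (range (\<lambda>i. \<Sum>j\<in>UNIV. \<bar>A $ i $ j\<bar>))"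

definition charpoly :: "real^'n::finite^'n \<Rightarrow> real poly" where
  "charpoly A = det (\<chi> i j. (if i = j then [:0, 1:] else 0) - [: A $ i $ j :])"

(* eigenvalues with algebraic multiplicity, sorted increasingly; lambda_2 = second smallest *)
definition lambda2 :: "real^'n::finite^'n \<Rightarrow> real" where
  "lambda2 A = sorted_list_of_multiset (proots (charpoly A)) ! 1"

definition Gamma_inf :: "real^'n::finite^'n \<Rightarrow> real \<Rightarrow> real" where
  "Gamma_inf L \<gamma> = Sup {inf_norm (exp (\<gamma> * t) *\<^sub>R (mat_exp (- (t *\<^sub>R L)) - avg_mat)) | t. t \<ge> 0}"

end

theory Submission
  imports Defs
begin

text \<open>The Laplacian \<open>L\<close> of an undirected graph is symmetric and positive semidefinite, so it
  has an orthonormal eigenbasis \<open>b\<^sub>k\<close> with eigenvalues \<open>\<mu>\<^sub>k \<ge> 0\<close>. Since \<open>L\<close> kills constant vectors,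
  some eigenvalue \<open>\<mu>\<^sub>k\<^sub>0\<close> vanishes, and on a connected graph the corresponding eigenvector is
  constant, so \<open>b\<^sub>k\<^sub>0 b\<^sub>k\<^sub>0\<^sup>T\<close> is the averaging matrix \<open>J\<close>. In the eigenbasis
  \<open>exp(\<gamma> t) (exp(-L t) - J) = \<Sum>\<^sub>k \<^sub>\<noteq> \<^sub>k\<^sub>0 exp((\<gamma> - \<mu>\<^sub>k) t) b\<^sub>k b\<^sub>k\<^sup>T\<close>, with coefficients in \<open>[0, 1]\<close> when
  \<open>\<gamma> \<le> \<lambda>\<^sub>2\<close>. Every row of such a matrix has squared Euclidean norm at most \<open>1 - 1/N\<close>, so by
  Cauchy-Schwarz its absolute row sum is at most \<open>sqrt(N - 1) \<le> N - 1\<close>. At \<open>t = 0\<close> the matrix is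
  \<open>I - J\<close>, of row-sum norm \<open>2 - 2/N\<close>. For the complete graph \<open>L = N (I - J)\<close>, so all other
  eigenvalues equal \<open>N\<close> and the matrix is \<open>exp((\<gamma> - N) t) (I - J)\<close>.\<close>

section \<open>Spectral theorem for real symmetric matrices\<close>

lemma symmetric_matrix_inner:
  fixes A :: "real^'n::finite^'n"
  assumes "transpose A = A"
  shows "(A *v x) \<bullet> y = x \<bullet> (A *v y)"
  by (metis assms dot_lmul_matrix vector_transpose_matrix)

lemma nonneg_eq_0_if_quadratic_nonpos:
  fixes a c :: real
  assumes "a \<ge> 0" and "\<And>s. 2 * s * a + s\<^sup>2 * c \<le> 0"
  shows "a = 0"
proof (rule ccontr)
  assume "a \<noteq> 0"
  with assms(1) have a: "a > 0" by simp
  define s where "s = a / (\<bar>c\<bar> + 1)"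
  have s: "s > 0" "s * \<bar>c\<bar> \<le> a"
    using a by (simp_all add: s_def field_simps)
  have "- (s * \<bar>c\<bar>) \<le> s * c"
    using s(1) mult_left_mono[OF abs_ge_minus_self[of c], of s] by simp
  with a s have "s * (2 * a + s * c) > 0" by (intro mult_pos_pos) linarith+
  with assms(2)[of s] show False by (simp add: algebra_simps power2_eq_square)
qed

text \<open>First-order optimality: perturbing the maximiser \<open>u\<close> of the Rayleigh quotient in the
  direction of the residual \<open>w = A u - (u \<bullet> A u) u \<perp> u\<close> gains \<open>2 s |w|\<^sup>2 + O(s\<^sup>2)\<close>, so \<open>w = 0\<close>.\<close>
lemma rayleigh_maximizer_is_eigenvector:
  fixes A :: "real^'n::finite^'n"
  assumes sym: "transpose A = A" and W: "subspace W" "\<And>x. x \<in> W \<Longrightarrow> A *v x \<in> W"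
    and u: "u \<in> W" "norm u = 1"
    and max: "\<And>y. y \<in> W \<Longrightarrow> norm y = 1 \<Longrightarrow> y \<bullet> (A *v y) \<le> u \<bullet> (A *v u)"
  shows "A *v u = (u \<bullet> (A *v u)) *\<^sub>R u"
proof -
  define Q where "Q x = x \<bullet> (A *v x)" for x
  have uu: "u \<bullet> u = 1" using u(2) by (simp add: norm_eq_1)
  have Q_le: "Q y \<le> Q u * (y \<bullet> y)" if "y \<in> W" for y
  proof (cases "y = 0")
    case False
    then have "Q (y /\<^sub>R norm y) \<le> Q u"
      unfolding Q_def using that W(1) by (intro max) (auto simp: subspace_scale)
    moreover have "Q (y /\<^sub>R norm y) = Q y / (norm y)\<^sup>2"
      by (simp add: Q_def matrix_vector_mult_scaleR power2_eq_square divide_inverse)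
    ultimately show ?thesis
      using False by (simp add: divide_le_eq power2_norm_eq_inner)
  qed (simp add: Q_def)
  define w where "w = A *v u - Q u *\<^sub>R u"
  have wW: "w \<in> W" unfolding w_def using W u(1) by (intro subspace_diff subspace_scale) auto
  have wu: "w \<bullet> u = 0"
    unfolding w_def Q_def using uu by (simp add: inner_diff_left inner_commute[of "A *v u" u])
  have wAu: "w \<bullet> (A *v u) = w \<bullet> w"
    using wu by (simp add: w_def inner_diff_right inner_commute[of w u])
  have "2 * s * (w \<bullet> w) + s\<^sup>2 * (Q w - Q u * (w \<bullet> w)) \<le> 0" for s
  proof -
    define y where "y = u + s *\<^sub>R w"
    have "y \<in> W" unfolding y_def using W(1) u(1) wW by (intro subspace_add subspace_scale)
    then have "Q y \<le> Q u * (y \<bullet> y)" by (rule Q_le)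
    moreover have "y \<bullet> y = 1 + s\<^sup>2 * (w \<bullet> w)"
      unfolding y_def using uu wu
      by (simp add: inner_add_left inner_add_right inner_commute power2_eq_square)
    moreover have "Q y = Q u + 2 * s * (w \<bullet> w) + s\<^sup>2 * Q w"
      using symmetric_matrix_inner[OF sym, of w u] wAu
      by (simp add: y_def Q_def matrix_vector_right_distrib matrix_vector_mult_scaleR
          inner_add_left inner_add_right inner_commute[of u] power2_eq_square algebra_simps)
    ultimately show ?thesis by (simp add: algebra_simps)
  qed
  then have "w \<bullet> w = 0" by (intro nonneg_eq_0_if_quadratic_nonpos) simp_all
  then show ?thesis by (simp add: w_def Q_def)
qed

lemma symmetric_matrix_eigenvector_in_invariant_subspace:
  fixes A :: "real^'n::finite^'n"
  assumes sym: "transpose A = A" and W: "subspace W" "\<And>x. x \<in> W \<Longrightarrow> A *v x \<in> W"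
    and nontriv: "x \<in> W" "x \<noteq> 0"
  obtains u where "u \<in> W" "norm u = 1" "A *v u = (u \<bullet> (A *v u)) *\<^sub>R u"
proof -
  define K where "K = W \<inter> sphere 0 1"
  have "compact K"
    unfolding K_def using W(1) by (intro closed_Int_compact closed_subspace) auto
  moreover have "x /\<^sub>R norm x \<in> K"
    unfolding K_def using nontriv W(1) by (auto simp: subspace_scale)
  moreover have "continuous_on K (\<lambda>y. y \<bullet> (A *v y))"
    by (intro continuous_on_inner continuous_on_id matrix_vector_mult_linear_continuous_on)
  ultimately obtain u where "u \<in> K" "\<And>y. y \<in> K \<Longrightarrow> y \<bullet> (A *v y) \<le> u \<bullet> (A *v u)"
    using continuous_attains_sup[of K] by blast
  with rayleigh_maximizer_is_eigenvector[OF sym W] that show ?thesis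
    by (auto simp: K_def)
qed

theorem symmetric_matrix_orthonormal_eigenbasis:
  fixes A :: "real^'n::finite^'n"
  assumes sym: "transpose A = A"
  obtains b :: "'n \<Rightarrow> real^'n" and \<mu> :: "'n \<Rightarrow> real"
  where "\<And>k l. b k \<bullet> b l = (if k = l then 1 else 0)" and "\<And>k. A *v b k = \<mu> k *\<^sub>R b k"
proof -
  have "\<exists>b \<mu>. (\<forall>k\<in>S. \<forall>l\<in>S. b k \<bullet> b l = (if k = l then 1 else 0 :: real))
              \<and> (\<forall>k\<in>S. A *v b k = \<mu> k *\<^sub>R b k)" for S :: "'n set"
    using finite[of S]
  proof (induction S rule: finite_induct)
    case (insert a S)
    then obtain b \<mu> where orth: "\<forall>k\<in>S. \<forall>l\<in>S. b k \<bullet> b l = (if k = l then 1 else 0 :: real)"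
      and eig: "\<forall>k\<in>S. A *v b k = \<mu> k *\<^sub>R b k" by blast
    define W where "W = {y. \<forall>x\<in>b ` S. orthogonal x y}"
    have "subspace W" unfolding W_def by (rule subspace_orthogonal_to_vectors)
    moreover have "A *v x \<in> W" if "x \<in> W" for x
      using that eig symmetric_matrix_inner[OF sym]
      by (auto simp: W_def orthogonal_def inner_commute)
    moreover obtain x where "x \<in> W" "x \<noteq> 0"
    proof -
      have "card (insert a S) \<le> CARD('n)" by (rule card_mono) auto
      with insert.hyps have "dim (b ` S) < DIM(real^'n)"
        using dim_le_card'[of "b ` S"] card_image_le[of S b] by simp
      then obtain x where "x \<noteq> 0" and x: "\<And>y. y \<in> span (b ` S) \<Longrightarrow> orthogonal x y"
        by (rule orthogonal_to_subspace_exists) auto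
      have "x \<in> W"
        unfolding W_def using x by (auto intro: orthogonal_commute[THEN iffD1] span_base)
      with \<open>x \<noteq> 0\<close> that show ?thesis by blast
    qed
    ultimately obtain u where u: "u \<in> W" "norm u = 1" "A *v u = (u \<bullet> (A *v u)) *\<^sub>R u"
      using symmetric_matrix_eigenvector_in_invariant_subspace[OF sym] by metis
    have "u \<bullet> u = 1" using u(2) by (simp add: norm_eq_1)
    with orth eig u insert.hyps(2)
    have "(\<forall>k\<in>insert a S. \<forall>l\<in>insert a S. (b(a := u)) k \<bullet> (b(a := u)) l = (if k = l then 1 else 0))
        \<and> (\<forall>k\<in>insert a S. A *v (b(a := u)) k = (\<mu>(a := u \<bullet> (A *v u))) k *\<^sub>R (b(a := u)) k)"
      by (auto simp: W_def orthogonal_def inner_commute)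
    then show ?case by blast
  qed simp
  from this[of UNIV] that show ?thesis by auto
qed

section \<open>Functions of a symmetric matrix\<close>

lemma poly_det: "poly (det M) x = det (\<chi> i j. poly (M $ i $ j) x)"
  unfolding det_def by (simp add: poly_sum poly_prod)

locale orthonormal_eigenbasis =
  fixes A :: "real^'n::finite^'n" and b :: "'n \<Rightarrow> real^'n" and \<mu> :: "'n \<Rightarrow> real"
  assumes orthonormal: "\<And>k l. b k \<bullet> b l = (if k = l then 1 else 0)"
    and eigen: "\<And>k. A *v b k = \<mu> k *\<^sub>R b k"
begin

definition basis_mat :: "real^'n^'n" where
  "basis_mat = (\<chi> i k. b k $ i)"

definition spectral :: "('n \<Rightarrow> real) \<Rightarrow> real^'n^'n" where
  "spectral c = (\<chi> i j. \<Sum>k\<in>UNIV. c k * b k $ i * b k $ j)"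

lemma basis_mat_orthogonal: "basis_mat ** transpose basis_mat = mat 1"
proof -
  have "transpose basis_mat ** basis_mat = mat 1"
    using orthonormal
    by (simp add: vec_eq_iff matrix_matrix_mult_def transpose_def basis_mat_def mat_def
        inner_vec_def)
  then show ?thesis using matrix_left_right_inverse by blast
qed

lemma basis_complete: "(\<Sum>k\<in>UNIV. b k $ i * b k $ j) = (if i = j then 1 else 0)"
  using arg_cong[OF basis_mat_orthogonal, of "\<lambda>M. M $ i $ j"]
  by (simp add: matrix_matrix_mult_def transpose_def basis_mat_def mat_def)

lemma basis_expansion: "x = (\<Sum>k\<in>UNIV. (x \<bullet> b k) *\<^sub>R b k)"
proof -
  have "(\<Sum>k\<in>UNIV. (x \<bullet> b k) * b k $ i) = (\<Sum>k\<in>UNIV. \<Sum>j\<in>UNIV. x $ j * b k $ j * b k $ i)"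
    for i by (simp add: inner_vec_def sum_distrib_right)
  also have "\<dots> i = (\<Sum>j\<in>UNIV. x $ j * (\<Sum>k\<in>UNIV. b k $ j * b k $ i))" for i
    by (subst sum.swap) (simp add: sum_distrib_left mult.assoc)
  finally show ?thesis
    by (simp add: vec_eq_iff sum_component basis_complete if_distrib cong: if_cong)
qed

lemma orthonormal_sum: "(\<Sum>l\<in>UNIV. b k $ l * b m $ l) = (if k = m then 1 else 0)"
  using orthonormal[of k m] by (simp add: inner_vec_def)

lemma spectral_mult: "spectral c ** spectral d = spectral (\<lambda>k. c k * d k)"
proof -
  have "(\<Sum>l\<in>UNIV. (\<Sum>k\<in>UNIV. c k * b k $ i * b k $ l) * (\<Sum>m\<in>UNIV. d m * b m $ l * b m $ j))
      = (\<Sum>l\<in>UNIV. \<Sum>k\<in>UNIV. \<Sum>m\<in>UNIV. (c k * b k $ i) * (d m * b m $ j) * (b k $ l * b m $ l))"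
    for i j unfolding sum_product by (intro sum.cong refl) (simp add: mult_ac)
  also have "\<dots> i j = (\<Sum>k\<in>UNIV. \<Sum>m\<in>UNIV. \<Sum>l\<in>UNIV. (c k * b k $ i) * (d m * b m $ j) * (b k $ l * b m $ l))"
    for i j by (subst sum.swap) (rule sum.cong[OF refl], rule sum.swap)
  also have "\<dots> i j = (\<Sum>k\<in>UNIV. \<Sum>m\<in>UNIV. (c k * b k $ i) * (d m * b m $ j) * (if k = m then 1 else 0))"
    for i j by (simp add: sum_distrib_left[symmetric] orthonormal_sum)
  finally show ?thesis
    by (simp add: spectral_def matrix_matrix_mult_def vec_eq_iff mult_ac if_distrib cong: if_cong)
qed

lemma spectral_one: "spectral (\<lambda>k. 1) = mat 1"
  by (simp add: spectral_def vec_eq_iff basis_complete mat_def)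

lemma spectral_eigenvalues: "spectral \<mu> = A"
proof -
  have "A $ i $ j = (\<Sum>l\<in>UNIV. A $ i $ l * (\<Sum>k\<in>UNIV. b k $ l * b k $ j))" for i j
    by (simp add: basis_complete if_distrib cong: if_cong)
  also have "\<dots> i j = (\<Sum>k\<in>UNIV. (A *v b k) $ i * b k $ j)" for i j
    by (simp add: matrix_vector_mult_def sum_distrib_left sum_distrib_right mult_ac)
      (rule sum.swap)
  finally show ?thesis by (simp add: spectral_def vec_eq_iff eigen)
qed

lemma spectral_scaleR: "a *\<^sub>R spectral c = spectral (\<lambda>k. a * c k)"
  by (simp add: spectral_def vec_eq_iff sum_distrib_left mult_ac)

lemma spectral_diff: "spectral c - spectral d = spectral (\<lambda>k. c k - d k)"
  by (simp add: spectral_def vec_eq_iff sum_subtractf[symmetric] algebra_simps)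

lemma spectral_mult_basis: "spectral c *v b k = c k *\<^sub>R b k"
proof -
  have "(\<Sum>j\<in>UNIV. (\<Sum>l\<in>UNIV. c l * b l $ i * b l $ j) * b k $ j)
      = (\<Sum>l\<in>UNIV. c l * b l $ i * (\<Sum>j\<in>UNIV. b l $ j * b k $ j))" for i
    by (simp add: sum_distrib_left sum_distrib_right mult_ac) (rule sum.swap)
  then show ?thesis
    by (simp add: vec_eq_iff spectral_def matrix_vector_mult_def orthonormal_sum if_distrib
        cong: if_cong)
qed

lemma mat_pow_spectral: "mat_pow (spectral c) m = spectral (\<lambda>k. c k ^ m)"
  by (induction m) (simp_all add: spectral_one spectral_mult)

lemma mat_exp_spectral: "mat_exp (spectral c) = spectral (\<lambda>k. exp (c k))"
proof -
  define P where "P k = (\<chi> i j. b k $ i * b k $ j)" for k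
  have spectral_P: "spectral d = (\<Sum>k\<in>UNIV. d k *\<^sub>R P k)" for d
    by (simp add: spectral_def P_def vec_eq_iff sum_component mult.assoc)
  have "(\<lambda>m. c k ^ m / fact m) sums exp (c k)" for k
    using exp_converges[of "c k"] by (simp add: divide_inverse mult.commute)
  then have "(\<lambda>m. \<Sum>k\<in>UNIV. (c k ^ m / fact m) *\<^sub>R P k) sums (\<Sum>k\<in>UNIV. exp (c k) *\<^sub>R P k)"
    by (intro sums_sum sums_scaleR_left)
  then have "(\<lambda>m. (1 / fact m) *\<^sub>R mat_pow (spectral c) m) sums spectral (\<lambda>k. exp (c k))"
    by (simp only: mat_pow_spectral) (simp add: spectral_P scaleR_sum_right)
  then show ?thesis
    unfolding mat_exp_def by (rule sums_unique[symmetric])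
qed

lemma spectral_decomposition:
  "spectral c = basis_mat ** (\<chi> i j. if i = j then c i else 0) ** transpose basis_mat"
  by (simp add: spectral_def vec_eq_iff matrix_matrix_mult_def basis_mat_def transpose_def
      if_distrib sum_distrib_right mult_ac cong: if_cong)

lemma det_spectral: "det (spectral c) = (\<Prod>k\<in>UNIV. c k)"
proof -
  have "det (spectral c) = det (basis_mat ** transpose basis_mat) * det (\<chi> i j. if i = j then c i else 0)"
    by (simp add: spectral_decomposition det_mul)
  then show ?thesis
    by (simp add: basis_mat_orthogonal det_diagonal)
qed

lemma charpoly_eq: "charpoly A = (\<Prod>k\<in>UNIV. [:- \<mu> k, 1:])"
proof -
  have "poly (charpoly A) x = det (spectral (\<lambda>k. x - \<mu> k))" for x
  proof -
    have "(\<chi> i j. poly ((if i = j then [:0, 1:] else 0) - [: A $ i $ j :]) x) = x *\<^sub>R mat 1 - A"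
      by (simp add: vec_eq_iff mat_def)
    also have "\<dots> = spectral (\<lambda>k. x - \<mu> k)"
      by (simp flip: spectral_one spectral_eigenvalues add: spectral_scaleR spectral_diff)
    finally show ?thesis
      by (simp add: charpoly_def poly_det)
  qed
  then show ?thesis
    by (simp add: det_spectral poly_prod poly_eq_poly_eq_iff[symmetric] fun_eq_iff)
qed

lemma proots_charpoly: "proots (charpoly A) = image_mset \<mu> (mset_set UNIV)"
proof -
  have "proots (charpoly A) = (\<Sum>k\<in>UNIV. {# \<mu> k #})"
    unfolding charpoly_eq by (subst proots_prod) auto
  also have "\<dots> = image_mset \<mu> (mset_set UNIV)"
    by (induction rule: finite_induct[OF finite[of UNIV]]) auto
  finally show ?thesis .
qed

lemma spectral_row_sum_squares:
  "(\<Sum>j\<in>UNIV. (spectral c $ i $ j)\<^sup>2) = (\<Sum>k\<in>UNIV. (c k)\<^sup>2 * (b k $ i)\<^sup>2)"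
proof -
  have "(\<Sum>j\<in>UNIV. (spectral c $ i $ j)\<^sup>2) = (spectral c ** spectral c) $ i $ i"
    by (simp add: matrix_matrix_mult_def power2_eq_square spectral_def mult_ac)
  also have "\<dots> = spectral (\<lambda>k. c k * c k) $ i $ i"
    by (simp only: spectral_mult)
  finally show ?thesis
    by (simp add: spectral_def power2_eq_square mult_ac)
qed

text \<open>Rows of \<open>spectral c\<close> have squared Euclidean norm at most \<open>1 - 1/N\<close>; Cauchy-Schwarz converts
  this into the bound on absolute row sums.\<close>
lemma spectral_row_abs_sum_le:
  assumes "c k0 = 0" and "\<And>k. \<bar>c k\<bar> \<le> 1" and "\<And>i. (b k0 $ i)\<^sup>2 = 1 / real CARD('n)"
  shows "(\<Sum>j\<in>UNIV. \<bar>spectral c $ i $ j\<bar>) \<le> sqrt (real CARD('n) - 1)"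
proof (rule real_le_rsqrt)
  have "(\<Sum>k\<in>UNIV. (c k)\<^sup>2 * (b k $ i)\<^sup>2) \<le> (\<Sum>k\<in>UNIV - {k0}. (b k $ i)\<^sup>2)"
  proof -
    have "(c k)\<^sup>2 * (b k $ i)\<^sup>2 \<le> (b k $ i)\<^sup>2" for k
      using assms(2)[of k] by (intro mult_left_le_one_le) (auto simp: abs_square_le_1)
    then have "(\<Sum>k\<in>UNIV - {k0}. (c k)\<^sup>2 * (b k $ i)\<^sup>2) \<le> (\<Sum>k\<in>UNIV - {k0}. (b k $ i)\<^sup>2)"
      by (rule sum_mono)
    then show ?thesis
      using assms(1) by (simp add: sum_diff1)
  qed
  also have "\<dots> = 1 - 1 / real CARD('n)"
    using basis_complete[of i i] assms(3) by (simp add: sum_diff1 power2_eq_square)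
  finally have row: "(\<Sum>j\<in>UNIV. (spectral c $ i $ j)\<^sup>2) \<le> 1 - 1 / real CARD('n)"
    by (simp add: spectral_row_sum_squares)
  have "(\<Sum>j\<in>UNIV. \<bar>spectral c $ i $ j\<bar> * 1)\<^sup>2
      \<le> (\<Sum>j\<in>UNIV. (spectral c $ i $ j)\<^sup>2) * real CARD('n)"
    using Cauchy_Schwarz_ineq_sum[of "\<lambda>j. \<bar>spectral c $ i $ j\<bar>" "\<lambda>j. 1" UNIV] by simp
  also have "\<dots> \<le> (1 - 1 / real CARD('n)) * real CARD('n)"
    using row by (rule mult_right_mono) simp
  also have "\<dots> = real CARD('n) - 1"
    by (simp add: field_simps)
  finally show "(\<Sum>j\<in>UNIV. \<bar>spectral c $ i $ j\<bar>)\<^sup>2 \<le> real CARD('n) - 1"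
    by simp
qed

end

section \<open>Graph Laplacians\<close>

lemma laplacian_symmetric:
  assumes "undirected_graph E"
  shows "transpose (laplacian E) = laplacian E"
  using assms unfolding undirected_graph_def laplacian_def transpose_def by (auto simp: vec_eq_iff)

lemma laplacian_mult_vec:
  assumes "undirected_graph E"
  shows "(laplacian E *v x) $ i = (\<Sum>j\<in>UNIV. if E i j then x $ i - x $ j else 0)"
proof -
  have "\<not> E i i" using assms unfolding undirected_graph_def by auto
  then have "(laplacian E *v x) $ i
      = (\<Sum>j\<in>UNIV. (if j = i then real (card {k. E i k}) * x $ i else 0) - (if E i j then x $ j else 0))"
    unfolding matrix_vector_mult_def laplacian_def by (simp only: vec_lambda_beta) (rule sum.cong, auto)
  then show ?thesis
    by (simp add: sum_subtractf sum.If_cases)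
qed

lemma laplacian_mult_ones:
  assumes "undirected_graph E"
  shows "laplacian E *v (\<chi> i. 1) = 0"
  by (simp add: vec_eq_iff laplacian_mult_vec[OF assms] cong: if_cong)

lemma laplacian_quadratic_form:
  assumes "undirected_graph E"
  shows "x \<bullet> (laplacian E *v x) = (\<Sum>i\<in>UNIV. \<Sum>j\<in>UNIV. if E i j then (x $ i - x $ j)\<^sup>2 else 0) / 2"
proof -
  define S where "S = (\<Sum>i\<in>UNIV. \<Sum>j\<in>UNIV. if E i j then x $ i * (x $ i - x $ j) else 0)"
  define S' where "S' = (\<Sum>i\<in>UNIV. \<Sum>j\<in>UNIV. if E i j then x $ j * (x $ j - x $ i) else 0)"
  have "x \<bullet> (laplacian E *v x) = S"
    unfolding S_def inner_vec_def laplacian_mult_vec[OF assms]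
    by (simp add: sum_distrib_left if_distrib cong: if_cong)
  moreover have "S = S'"
    unfolding S_def S'_def using assms
    by (subst sum.swap) (intro sum.cong refl, auto simp: undirected_graph_def)
  moreover have "S + S' = (\<Sum>i\<in>UNIV. \<Sum>j\<in>UNIV. if E i j then (x $ i - x $ j)\<^sup>2 else 0)"
    unfolding S_def S'_def sum.distrib[symmetric]
    by (intro sum.cong refl) (auto simp: power2_eq_square algebra_simps)
  ultimately show ?thesis by simp
qed

lemma laplacian_quadratic_form_nonneg:
  assumes "undirected_graph E"
  shows "x \<bullet> (laplacian E *v x) \<ge> 0"
  unfolding laplacian_quadratic_form[OF assms] by (intro divide_nonneg_pos sum_nonneg) auto

lemma laplacian_quadratic_form_eq_0_imp_const:
  assumes "undirected_graph E" and "graph_connected E" and "x \<bullet> (laplacian E *v x) = 0"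
  shows "x $ i = x $ j"
proof -
  have "(\<Sum>i\<in>UNIV. \<Sum>j\<in>UNIV. if E i j then (x $ i - x $ j)\<^sup>2 else 0) = 0"
    using assms(3) unfolding laplacian_quadratic_form[OF assms(1)] by simp
  then have "(if E i j then (x $ i - x $ j)\<^sup>2 else 0) = 0" for i j
    by (simp add: sum_nonneg_eq_0_iff sum_nonneg)
  then have edge: "E i j \<Longrightarrow> x $ i = x $ j" for i j
    by (metis power_eq_0_iff right_minus_eq)
  have "E\<^sup>*\<^sup>* i j" using assms(2) unfolding graph_connected_def by auto
  then show ?thesis by (induction rule: rtranclp_induct) (auto dest: edge)
qed

lemma laplacian_complete_graph:
  fixes E :: "'n::finite \<Rightarrow> 'n \<Rightarrow> bool"
  assumes "undirected_graph E" and "complete_graph E"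
  shows "laplacian E = real CARD('n) *\<^sub>R (mat 1 - avg_mat)"
proof -
  have E_eq: "E = (\<lambda>i j. i \<noteq> j)"
    using assms unfolding complete_graph_def undirected_graph_def by (auto simp: fun_eq_iff)
  have "{k. i \<noteq> k} = UNIV - {i}" for i :: 'n
    by auto
  then have "real (card {k. i \<noteq> k}) = real CARD('n) - 1" for i :: 'n
    by (simp add: card_Diff_singleton of_nat_diff)
  then show ?thesis
    by (auto simp: E_eq laplacian_def avg_mat_def mat_def vec_eq_iff field_simps)
qed

section \<open>The row-sum norm\<close>

lemma inf_norm_le:
  assumes "\<And>i. (\<Sum>j\<in>UNIV. \<bar>M $ i $ j\<bar>) \<le> B"
  shows "inf_norm M \<le> B"
  unfolding inf_norm_def using assms by simp

lemma inf_norm_scaleR: "inf_norm (a *\<^sub>R M) = \<bar>a\<bar> * inf_norm M"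
proof -
  have "mono (\<lambda>x. \<bar>a\<bar> * x)" by (simp add: mono_def mult_left_mono)
  then show ?thesis
    unfolding inf_norm_def by (subst mono_Max_commute) (auto simp: abs_mult sum_distrib_left image_image)
qed

lemma inf_norm_identity_minus_avg_mat:
  "inf_norm (mat 1 - avg_mat :: real^'n::finite^'n) = 2 - 2 / real CARD('n)"
proof -
  define N where "N = real CARD('n)"
  have "1 / N \<le> 1" "N \<ge> 0" by (simp_all add: N_def)
  then have "\<bar>(mat 1 - avg_mat :: real^'n^'n) $ i $ j\<bar> = 1 / N + (if j = i then 1 - 2 / N else 0)"
    for i j by (simp add: avg_mat_def mat_def N_def[symmetric])
  then have "(\<Sum>j\<in>UNIV. \<bar>(mat 1 - avg_mat :: real^'n^'n) $ i $ j\<bar>) = N * (1 / N) + (1 - 2 / N)"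
    for i by (simp add: sum.distrib N_def)
  also have "\<dots> = 2 - 2 / N"
    by (simp add: N_def)
  finally show ?thesis
    by (simp add: inf_norm_def N_def)
qed

section \<open>Consensus error of a connected graph\<close>

definition consensus_error :: "real^'n::finite^'n \<Rightarrow> real \<Rightarrow> real \<Rightarrow> real^'n^'n" where
  "consensus_error L \<gamma> t = exp (\<gamma> * t) *\<^sub>R (mat_exp (- (t *\<^sub>R L)) - avg_mat)"

lemma Sup_nonneg_reals_bounds:
  fixes f :: "real \<Rightarrow> real"
  assumes "\<And>t. 0 \<le> t \<Longrightarrow> f t \<le> B"
  shows "bdd_above {f t | t. 0 \<le> t}" and "f 0 \<le> Sup {f t | t. 0 \<le> t}"
    and "Sup {f t | t. 0 \<le> t} \<le> B"
proof -
  show bdd: "bdd_above {f t | t. 0 \<le> t}"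
    using assms unfolding bdd_above_def by auto
  show "f 0 \<le> Sup {f t | t. 0 \<le> t}"
    by (rule cSup_upper[OF _ bdd]) auto
  show "Sup {f t | t. 0 \<le> t} \<le> B"
    using assms by (intro cSup_least) auto
qed

lemma sorted_list_of_multiset_nth_0_eq_Min:
  fixes M :: "'a::linorder multiset"
  assumes "M \<noteq> {#}"
  shows "sorted_list_of_multiset M ! 0 = Min (set_mset M)"
proof -
  define xs where "xs = sorted_list_of_multiset M"
  have "mset xs = M" "sorted xs"
    by (simp_all add: xs_def)
  with assms have "xs \<noteq> []" "sorted xs"
    by auto
  then have "xs ! 0 = Min (set xs)"
    by (intro Min_eqI[symmetric]) (auto simp: in_set_conv_nth sorted_nth_mono)
  then show ?thesis by (simp add: xs_def)
qed

lemma ex_other_if_CARD_ge_2: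
  assumes "CARD('a::finite) \<ge> 2"
  shows "\<exists>y::'a. y \<noteq> x"
proof (rule ccontr)
  assume "\<nexists>y. y \<noteq> x"
  then have "UNIV = {x}" by auto
  then have "CARD('a) = card {x}" by (rule arg_cong)
  with assms show False by simp
qed

locale connected_laplacian_eigenbasis = orthonormal_eigenbasis "laplacian E" b \<mu>
  for E :: "'n::finite \<Rightarrow> 'n \<Rightarrow> bool" and b \<mu> +
  assumes undirected: "undirected_graph E" and connected: "graph_connected E"
begin

lemma eigenvalue_eq_quadratic_form: "\<mu> k = b k \<bullet> (laplacian E *v b k)"
  using orthonormal[of k k] by (simp add: eigen)

lemma eigenvalue_nonneg: "\<mu> k \<ge> 0"
  unfolding eigenvalue_eq_quadratic_form by (rule laplacian_quadratic_form_nonneg[OF undirected])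

lemma eigenvector_const_if_eigenvalue_0: "\<mu> k = 0 \<Longrightarrow> b k $ i = b k $ j"
  using laplacian_quadratic_form_eq_0_imp_const[OF undirected connected]
  by (simp add: eigenvalue_eq_quadratic_form)

lemma eigenvector_square_if_eigenvalue_0:
  assumes "\<mu> k = 0"
  shows "(b k $ i)\<^sup>2 = 1 / real CARD('n)"
proof -
  have "1 = (\<Sum>j\<in>UNIV. b k $ j * b k $ j)"
    using orthonormal[of k k] by (simp add: inner_vec_def)
  also have "\<dots> = (\<Sum>j\<in>(UNIV :: 'n set). b k $ i * b k $ i)"
    by (intro sum.cong refl) (metis eigenvector_const_if_eigenvalue_0[OF assms])
  also have "\<dots> = real CARD('n) * (b k $ i)\<^sup>2"
    by (simp add: power2_eq_square)
  finally show ?thesis by (simp add: field_simps)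
qed

lemma ex_eigenvalue_0: "\<exists>k. \<mu> k = 0"
proof (rule ccontr)
  assume "\<nexists>k. \<mu> k = 0"
  have "(\<chi> i. 1) \<bullet> b k = 0" for k
  proof -
    have "\<mu> k * ((\<chi> i. 1) \<bullet> b k) = (laplacian E *v (\<chi> i. 1)) \<bullet> b k"
      by (simp add: symmetric_matrix_inner[OF laplacian_symmetric[OF undirected]] eigen)
    with \<open>\<nexists>k. \<mu> k = 0\<close> show ?thesis
      by (simp add: laplacian_mult_ones[OF undirected])
  qed
  then have "(\<chi> i. 1) = (0 :: real^'n)"
    by (subst basis_expansion) simp
  then show False
    by (simp add: vec_eq_iff)
qed

context
  fixes k0 assumes eigenvalue_k0: "\<mu> k0 = 0"
begin

lemma avg_mat_spectral: "avg_mat = spectral (\<lambda>k. if k = k0 then 1 else 0)"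
proof -
  have "spectral (\<lambda>k. if k = k0 then 1 else 0) $ i $ j = b k0 $ i * b k0 $ j" for i j
    unfolding spectral_def by (subst sum.remove[of _ k0]) auto
  moreover have "b k0 $ i * b k0 $ j = 1 / real CARD('n)" for i j
    using eigenvector_square_if_eigenvalue_0[OF eigenvalue_k0, of i]
      eigenvector_const_if_eigenvalue_0[OF eigenvalue_k0, of j i]
    by (simp add: power2_eq_square)
  ultimately show ?thesis
    by (simp add: avg_mat_def vec_eq_iff)
qed

lemma identity_minus_avg_mat_spectral: "mat 1 - avg_mat = spectral (\<lambda>k. if k = k0 then 0 else 1)"
  unfolding avg_mat_spectral spectral_one[symmetric] spectral_diff
  by (rule arg_cong[where f = spectral]) auto

lemma lambda2_eq_Min:
  assumes "CARD('n) \<ge> 2"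
  shows "lambda2 (laplacian E) = Min (\<mu> ` (- {k0}))"
proof -
  define M where "M = image_mset \<mu> (mset_set (- {k0}))"
  have "mset_set (UNIV :: 'n set) = add_mset k0 (mset_set (- {k0}))"
    using mset_set.insert_remove[of UNIV k0] by (simp add: insert_UNIV Compl_eq_Diff_UNIV)
  then have "proots (charpoly (laplacian E)) = add_mset 0 M"
    by (simp add: proots_charpoly M_def eigenvalue_k0)
  moreover have "sorted_list_of_multiset (add_mset 0 M) = 0 # sorted_list_of_multiset M"
    unfolding sorted_list_of_multiset_insert
    by (rule insort_is_Cons) (auto simp: M_def eigenvalue_nonneg)
  moreover have "- {k0} \<noteq> {}"
    using ex_other_if_CARD_ge_2[OF assms] by auto
  then have "sorted_list_of_multiset M ! 0 = Min (\<mu> ` (- {k0}))"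
    by (subst sorted_list_of_multiset_nth_0_eq_Min) (auto simp: M_def mset_set_empty_iff)
  ultimately show ?thesis
    by (simp add: lambda2_def)
qed

lemma consensus_error_spectral:
  "consensus_error (laplacian E) \<gamma> t = spectral (\<lambda>k. if k = k0 then 0 else exp ((\<gamma> - \<mu> k) * t))"
proof -
  have "mat_exp (- (t *\<^sub>R laplacian E)) = spectral (\<lambda>k. exp (- t * \<mu> k))"
    by (metis spectral_eigenvalues spectral_scaleR scaleR_minus_left mat_exp_spectral)
  then have "consensus_error (laplacian E) \<gamma> t
      = exp (\<gamma> * t) *\<^sub>R (spectral (\<lambda>k. exp (- t * \<mu> k)) - spectral (\<lambda>k. if k = k0 then 1 else 0))"
    by (simp add: consensus_error_def avg_mat_spectral)
  also have "\<dots> = spectral (\<lambda>k. if k = k0 then 0 else exp ((\<gamma> - \<mu> k) * t))"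
    unfolding spectral_diff spectral_scaleR
    by (intro arg_cong[where f = spectral]) (auto simp: eigenvalue_k0 exp_add[symmetric] algebra_simps)
  finally show ?thesis .
qed

lemma consensus_error_at_0: "consensus_error (laplacian E) \<gamma> 0 = mat 1 - avg_mat"
  unfolding consensus_error_spectral identity_minus_avg_mat_spectral
  by (rule arg_cong[where f = spectral]) auto

lemma inf_norm_consensus_error_le:
  assumes "0 \<le> t" and "\<And>k. k \<noteq> k0 \<Longrightarrow> \<gamma> \<le> \<mu> k"
  shows "inf_norm (consensus_error (laplacian E) \<gamma> t) \<le> sqrt (real CARD('n) - 1)"
proof -
  have "\<bar>exp ((\<gamma> - \<mu> k) * t)\<bar> \<le> 1" if "k \<noteq> k0" for k
    using assms(2)[OF that] \<open>0 \<le> t\<close> by (simp add: mult_nonpos_nonneg)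
  then show ?thesis
    unfolding consensus_error_spectral
    by (intro inf_norm_le spectral_row_abs_sum_le[of _ k0])
      (simp_all add: eigenvector_square_if_eigenvalue_0[OF eigenvalue_k0])
qed

lemma complete_graph_eigenvalue:
  assumes "complete_graph E" and "k \<noteq> k0"
  shows "\<mu> k = real CARD('n)"
proof -
  have "\<mu> k *\<^sub>R b k = laplacian E *v b k"
    by (simp add: eigen)
  also have "\<dots> = real CARD('n) *\<^sub>R b k"
    unfolding laplacian_complete_graph[OF undirected assms(1)] identity_minus_avg_mat_spectral
      spectral_scaleR spectral_mult_basis
    using assms(2) by simp
  finally show ?thesis
    using orthonormal[of k k] by auto
qed

lemma consensus_error_complete_graph:
  assumes "complete_graph E"
  shows "consensus_error (laplacian E) \<gamma> t = exp ((\<gamma> - real CARD('n)) * t) *\<^sub>R (mat 1 - avg_mat)"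
  unfolding consensus_error_spectral identity_minus_avg_mat_spectral spectral_scaleR
  by (intro arg_cong[where f = spectral]) (auto simp: complete_graph_eigenvalue[OF assms])

end

lemma Gamma_inf_eq_Sup:
  "Gamma_inf (laplacian E) \<gamma> = Sup {inf_norm (consensus_error (laplacian E) \<gamma> t) | t. 0 \<le> t}"
  by (simp add: Gamma_inf_def consensus_error_def)

theorem Gamma_inf_bounds:
  assumes "CARD('n) \<ge> 2" and "\<gamma> \<le> lambda2 (laplacian E)"
  shows "bdd_above {inf_norm (consensus_error (laplacian E) \<gamma> t) | t. 0 \<le> t}"
    and "2 - 2 / real CARD('n) \<le> Gamma_inf (laplacian E) \<gamma>"
    and "Gamma_inf (laplacian E) \<gamma> \<le> real CARD('n) - 1"
proof -
  obtain k0 where k0: "\<mu> k0 = 0" using ex_eigenvalue_0 by blast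
  have "\<gamma> \<le> \<mu> k" if "k \<noteq> k0" for k
  proof -
    have "Min (\<mu> ` (- {k0})) \<le> \<mu> k"
      using that by (intro Min_le) auto
    with assms(2) show ?thesis
      by (simp add: lambda2_eq_Min[OF k0 assms(1)])
  qed
  moreover have "sqrt (real CARD('n) - 1) \<le> real CARD('n) - 1"
    using assms(1) by (intro real_le_lsqrt) (simp_all add: power2_eq_square)
  ultimately have "inf_norm (consensus_error (laplacian E) \<gamma> t) \<le> real CARD('n) - 1" if "0 \<le> t" for t
    using inf_norm_consensus_error_le[OF k0 that] by (meson order_trans)
  note Sup_bounds = Sup_nonneg_reals_bounds[of "\<lambda>t. inf_norm (consensus_error (laplacian E) \<gamma> t)", OF this]
  then show "bdd_above {inf_norm (consensus_error (laplacian E) \<gamma> t) | t. 0 \<le> t}"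
    and "Gamma_inf (laplacian E) \<gamma> \<le> real CARD('n) - 1"
    by (simp_all add: Gamma_inf_eq_Sup)
  show "2 - 2 / real CARD('n) \<le> Gamma_inf (laplacian E) \<gamma>"
    using Sup_bounds(2) by (simp add: Gamma_inf_eq_Sup consensus_error_at_0[OF k0]
        inf_norm_identity_minus_avg_mat)
qed

theorem lambda2_complete_graph:
  assumes "CARD('n) \<ge> 2" and "complete_graph E"
  shows "lambda2 (laplacian E) = real CARD('n)"
proof -
  obtain k0 where k0: "\<mu> k0 = 0" using ex_eigenvalue_0 by blast
  obtain k where "k \<noteq> k0"
    using ex_other_if_CARD_ge_2[OF assms(1)] by blast
  then have "\<mu> ` (- {k0}) = {real CARD('n)}"
    using complete_graph_eigenvalue[OF k0 assms(2)] by auto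
  then show ?thesis
    by (simp add: lambda2_eq_Min[OF k0 assms(1)])
qed

theorem Gamma_inf_complete_graph:
  assumes "complete_graph E" and "\<gamma> \<le> real CARD('n)"
  shows "Gamma_inf (laplacian E) \<gamma> = 2 - 2 / real CARD('n)"
proof -
  obtain k0 where k0: "\<mu> k0 = 0" using ex_eigenvalue_0 by blast
  have norm: "inf_norm (consensus_error (laplacian E) \<gamma> t)
      = exp ((\<gamma> - real CARD('n)) * t) * (2 - 2 / real CARD('n))" for t
    by (simp add: consensus_error_complete_graph[OF k0 assms(1)] inf_norm_scaleR
        inf_norm_identity_minus_avg_mat)
  have "inf_norm (consensus_error (laplacian E) \<gamma> t) \<le> 2 - 2 / real CARD('n)"
    if "0 \<le> t" for t
  proof -
    have "exp ((\<gamma> - real CARD('n)) * t) \<le> 1"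
      using assms(2) that by (simp add: mult_nonpos_nonneg)
    moreover have "0 \<le> 2 - 2 / real CARD('n)"
      by (simp add: field_simps)
    ultimately show ?thesis
      unfolding norm using mult_right_mono[of _ 1] by fastforce
  qed
  from Sup_nonneg_reals_bounds(2,3)[of "\<lambda>t. inf_norm (consensus_error (laplacian E) \<gamma> t)", OF this]
  show ?thesis
    by (simp add: Gamma_inf_eq_Sup norm)
qed

end

theorem proposition2:
  fixes E :: "'n::finite \<Rightarrow> 'n \<Rightarrow> bool"
  assumes "CARD('n) \<ge> 2"
    and "undirected_graph E"
    and "graph_connected E"
  shows "(\<forall>\<gamma>. 0 < \<gamma> \<and> \<gamma> \<le> lambda2 (laplacian E) \<longrightarrow>
            bdd_above {inf_norm (exp (\<gamma> * t) *\<^sub>R (mat_exp (- (t *\<^sub>R laplacian E)) - avg_mat)) | t. t \<ge> 0}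
          \<and> 2 - 2 / real CARD('n) \<le> Gamma_inf (laplacian E) \<gamma>
          \<and> Gamma_inf (laplacian E) \<gamma> \<le> real CARD('n) - 1)
       \<and> (complete_graph E \<longrightarrow>
            lambda2 (laplacian E) = real CARD('n)
          \<and> (\<forall>\<gamma>. 0 < \<gamma> \<and> \<gamma> \<le> real CARD('n) \<longrightarrow>
                 Gamma_inf (laplacian E) \<gamma> = 2 - 2 / real CARD('n)))"
proof -
  obtain b :: "'n \<Rightarrow> real^'n" and \<mu> where orthonormal: "\<And>k l. b k \<bullet> b l = (if k = l then 1 else 0)"
    and eigen: "\<And>k. laplacian E *v b k = \<mu> k *\<^sub>R b k"
    using symmetric_matrix_orthonormal_eigenbasis[OF laplacian_symmetric[OF assms(2)]] by blast
  interpret connected_laplacian_eigenbasis E b \<mu>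
    by unfold_locales (fact orthonormal eigen assms(2) assms(3))+
  show ?thesis
  proof (intro conjI allI impI)
    fix \<gamma> :: real
    assume "0 < \<gamma> \<and> \<gamma> \<le> lambda2 (laplacian E)"
    then show "bdd_above {inf_norm (exp (\<gamma> * t) *\<^sub>R (mat_exp (- (t *\<^sub>R laplacian E)) - avg_mat)) | t. t \<ge> 0}"
      and "2 - 2 / real CARD('n) \<le> Gamma_inf (laplacian E) \<gamma>"
      and "Gamma_inf (laplacian E) \<gamma> \<le> real CARD('n) - 1"
      using Gamma_inf_bounds[OF assms(1)] unfolding consensus_error_def by simp_all
  next
    assume "complete_graph E"
    then show "lambda2 (laplacian E) = real CARD('n)"
      and "\<And>\<gamma>. 0 < \<gamma> \<and> \<gamma> \<le> real CARD('n) \<Longrightarrow> Gamma_inf (laplacian E) \<gamma> = 2 - 2 / real CARD('n)"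
      using lambda2_complete_graph[OF assms(1)] Gamma_inf_complete_graph by simp_all
  qed
qed

end
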